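(* There exist $N_0\in\mathbb{N}$ and $C>0$ such that \[\frac{R^2}{w(B(x,R))}\pi(B(x,R))\le C\Big(\frac{R}{\rho_w(x,\mu)}\Big)^{N_0}\] for all $x\in\mathbb{R}^d$ and all $R\ge\rho_w(x,\mu)$.
   Context: Setting: $d\ge3$; $w\in A_2$ is a weight on $\mathbb{R}^d$, $w(E)=\int_Ew\,dx$, and there exist $\beta>2$, $C>0$ with $w(B(x,tr))\ge Ct^\beta w(B(x,r))$ for all $x$, $r>0$, $t>1$. $\mu$ is a positive Radon measure, $d\pi=w\,d\mu$, with constants $C_0,\delta,C_1>0$ such that (M1) $\frac{r^2}{w(B(x,r))}\pi(B(x,r))\le C_0 (r/R)^\delta \frac{R^2}{w(B(x,R))}\pi(B(x,R))$ for all $x$, $0<r<R$; (M2) $\pi(B(x,2r))\le C_1(\pi(B(x,r))+w(B(x,r))/r^2)$ for all $x$, $r>0$. The critical function is $\rho_w(x,\mu)=\sup\{r>0:\frac{r^2}{w(B(x,r))}\pi(B(x,r))\le C_1\}$. *)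

theory Defs
  imports "HOL-Analysis.Analysis"
begin

definition wmeas :: "('a::euclidean_space \<Rightarrow> real) \<Rightarrow> 'a set \<Rightarrow> real" where
  "wmeas w E = (LINT y:E|lborel. w y)"

definition A2_weight :: "('a::euclidean_space \<Rightarrow> real) \<Rightarrow> bool" where
  "A2_weight w \<longleftrightarrow>
     w \<in> borel_measurable borel \<and> (\<forall>x. 0 \<le> w x) \<and> (AE x in lborel. 0 < w x) \<and>
     (\<forall>x r. set_integrable lborel (ball x r) w \<and>
            set_integrable lborel (ball x r) (\<lambda>y. 1 / w y)) \<and>
     (\<exists>K. \<forall>x r. 0 < r \<longrightarrow>
        (1 / measure lborel (ball x r) * (LINT y:ball x r|lborel. w y)) *
        (1 / measure lborel (ball x r) * (LINT y:ball x r|lborel. 1 / w y)) \<le> K)"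

definition radon_measure :: "'a::euclidean_space measure \<Rightarrow> bool" where
  "radon_measure \<mu> \<longleftrightarrow> sets \<mu> = sets borel \<and> (\<forall>K. compact K \<longrightarrow> emeasure \<mu> K < \<infinity>)"

definition pimeas :: "('a::euclidean_space \<Rightarrow> real) \<Rightarrow> 'a measure \<Rightarrow> 'a set \<Rightarrow> ennreal" where
  "pimeas w \<mu> E = (\<integral>\<^sup>+ y\<in>E. ennreal (w y) \<partial>\<mu>)"

definition Qfun :: "('a::euclidean_space \<Rightarrow> real) \<Rightarrow> 'a measure \<Rightarrow> 'a \<Rightarrow> real \<Rightarrow> ennreal" where
  "Qfun w \<mu> x r = ennreal (r^2 / wmeas w (ball x r)) * pimeas w \<mu> (ball x r)"

definition rho_w :: "real \<Rightarrow> ('a::euclidean_space \<Rightarrow> real) \<Rightarrow> 'a measure \<Rightarrow> 'a \<Rightarrow> ereal" where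
  "rho_w C1 w \<mu> x = Sup {ereal r | r. 0 < r \<and> Qfun w \<mu> x r \<le> ennreal C1}"

end

theory Submission
  imports Defs
begin

text \<open>Write \<open>Q(r)\<close> for
  \<open>Qfun w \<mu> x r\<close>. If \<open>s \<le> R \<le> 2s\<close>, then (M2) and the monotonicity of \<open>w(B(x,\<cdot>))\<close> give
  \<open>Q(R) + 1 \<le> A (Q(s) + 1)\<close> with \<open>A = 4 C\<^sub>1 + 1\<close>, hence \<open>Q(R) + 1 \<le> A\<^sup>n (Q(r) + 1)\<close> whenever
  \<open>r \<le> R \<le> 2\<^sup>n r\<close>. Take \<open>r\<close> in \<open>(\<rho>/2, \<rho>]\<close> with \<open>Q(r) \<le> C\<^sub>1\<close>, where \<open>\<rho> = \<rho>\<^sub>w(x,\<mu>)\<close>; the least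
  such \<open>n\<close> has \<open>2\<^sup>n \<le> 4R/\<rho>\<close>, so choosing \<open>N\<close> with \<open>A \<le> 2\<^sup>N\<close> gives \<open>A\<^sup>n \<le> (4R/\<rho>)\<^sup>N\<close>.\<close>

lemma wmeas_ball_pos:
  fixes w :: "'a::euclidean_space \<Rightarrow> real"
  assumes A2: "A2_weight w" and r: "0 < r"
  shows "0 < wmeas w (ball x r)"
proof -
  have nn: "\<And>x. 0 \<le> w x" and ae: "AE x in lborel. 0 < w x"
    and int: "set_integrable lborel (ball x r) w"
    using A2 unfolding A2_weight_def by auto
  have int': "integrable lborel (\<lambda>y. indicator (ball x r) y * w y)"
    using int unfolding set_integrable_def by simp
  have ge: "0 \<le> wmeas w (ball x r)"
    unfolding wmeas_def set_lebesgue_integral_def using nn by (auto intro!: integral_nonneg_AE)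
  show ?thesis
  proof (rule ccontr)
    assume "\<not> ?thesis"
    then have "integral\<^sup>L lborel (\<lambda>y. indicator (ball x r) y * w y) = 0"
      using ge unfolding wmeas_def set_lebesgue_integral_def by simp
    then have "AE y in lborel. indicator (ball x r) y * w y = 0"
      using integral_nonneg_eq_0_iff_AE[OF int'] nn by simp
    with ae have "AE y in lborel. y \<notin> ball x r"
      by eventually_elim (auto simp: indicator_def)
    then have "emeasure lborel (ball x r) = 0"
      by (subst (asm) AE_iff_measurable[of "ball x r"]) auto
    moreover have "measure lborel (ball x r) > 0"
      using content_ball_pos r by blast
    ultimately show False
      by (simp add: measure_def)
  qed
qed

lemma wmeas_ball_mono:
  fixes w :: "'a::euclidean_space \<Rightarrow> real"
  assumes A2: "A2_weight w" and "r \<le> R"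
  shows "wmeas w (ball x r) \<le> wmeas w (ball x R)"
proof -
  have nn: "\<And>x. 0 \<le> w x"
    and int: "set_integrable lborel (ball x r) w" "set_integrable lborel (ball x R) w"
    using A2 unfolding A2_weight_def by auto
  show ?thesis
    unfolding wmeas_def set_lebesgue_integral_def
    using int nn \<open>r \<le> R\<close> unfolding set_integrable_def
    by (intro integral_mono) (auto simp: indicator_def)
qed

lemma Qfun_doubling_step:
  fixes w :: "'a::euclidean_space \<Rightarrow> real" and \<mu> :: "'a measure"
  assumes A2: "A2_weight w" and C1: "0 \<le> C1"
    and M2: "pimeas w \<mu> (ball x (2 * s)) \<le>
          ennreal C1 * (pimeas w \<mu> (ball x s) + ennreal (wmeas w (ball x s) / s^2))"
    and s: "0 < s" "s \<le> R" "R \<le> 2 * s"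
  shows "Qfun w \<mu> x R + 1 \<le> ennreal (4 * C1 + 1) * (Qfun w \<mu> x s + 1)"
proof -
  define ws where "ws = wmeas w (ball x s)"
  define a where "a = s^2 / ws"
  have ws: "0 < ws"
    unfolding ws_def using wmeas_ball_pos[OF A2 s(1)] .
  have a: "0 < a"
    unfolding a_def using ws s by simp
  have "R^2 \<le> (2 * s)^2"
    using s by (intro power_mono) auto
  then have "R^2 / wmeas w (ball x R) \<le> (4 * s^2) / ws"
    using ws wmeas_ball_mono[OF A2 s(2), of x] unfolding ws_def
    by (intro frac_le) (auto simp: power_mult_distrib)
  then have "R^2 / wmeas w (ball x R) \<le> 4 * a"
    unfolding a_def by simp
  moreover have "pimeas w \<mu> (ball x R) \<le> pimeas w \<mu> (ball x (2 * s))"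
    unfolding pimeas_def using s by (intro nn_set_integral_set_mono) auto
  ultimately have "Qfun w \<mu> x R \<le> ennreal (4 * a) * pimeas w \<mu> (ball x (2 * s))"
    unfolding Qfun_def by (intro mult_mono ennreal_leI) auto
  also have "\<dots> \<le> ennreal (4 * a) * (ennreal C1 * (pimeas w \<mu> (ball x s) + ennreal (1 / a)))"
    using M2 unfolding a_def ws_def by (intro mult_left_mono) auto
  also have "\<dots> = ennreal (4 * C1) * (ennreal a * pimeas w \<mu> (ball x s) + ennreal a * ennreal (1 / a))"
    using a C1 by (simp add: ennreal_mult distrib_left mult_ac)
  also have "ennreal a * ennreal (1 / a) = 1"
    using a by (simp add: ennreal_mult[symmetric])
  also have "ennreal a * pimeas w \<mu> (ball x s) = Qfun w \<mu> x s"
    unfolding Qfun_def a_def ws_def ..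
  finally have "Qfun w \<mu> x R + 1 \<le> ennreal (4 * C1) * (Qfun w \<mu> x s + 1) + (Qfun w \<mu> x s + 1)"
    by (intro add_mono) auto
  also have "\<dots> = ennreal (4 * C1 + 1) * (Qfun w \<mu> x s + 1)"
    using C1 by (simp add: ennreal_plus distrib_right)
  finally show ?thesis .
qed

lemma Qfun_growth_bound:
  fixes w :: "'a::euclidean_space \<Rightarrow> real" and \<mu> :: "'a measure"
  assumes A2: "A2_weight w" and C1: "0 \<le> C1"
    and M2: "\<And>x r. r > 0 \<Longrightarrow>
        pimeas w \<mu> (ball x (2 * r)) \<le>
          ennreal C1 * (pimeas w \<mu> (ball x r) + ennreal (wmeas w (ball x r) / r^2))"
    and r: "0 < r" "r \<le> R" "R \<le> 2^n * r"
  shows "Qfun w \<mu> x R + 1 \<le> ennreal ((4 * C1 + 1)^n) * (Qfun w \<mu> x r + 1)"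
  using r(2,3)
proof (induction n arbitrary: R)
  case 0
  then show ?case by simp
next
  case (Suc n)
  define A where "A = 4 * C1 + 1"
  have A: "1 \<le> A"
    unfolding A_def using C1 by simp
  have step: "Qfun w \<mu> x R + 1 \<le> ennreal A * (Qfun w \<mu> x s + 1)"
    if "0 < s" "s \<le> R" "R \<le> 2 * s" for s
    unfolding A_def using Qfun_doubling_step[OF A2 C1 M2 that] that(1) .
  consider "R \<le> 2 * r" | "2 * r < R" by linarith
  then show ?case
  proof cases
    case 1
    have "Qfun w \<mu> x R + 1 \<le> ennreal A * (Qfun w \<mu> x r + 1)"
      using step[of r] r(1) Suc.prems(1) 1 .
    also have "\<dots> \<le> ennreal (A ^ Suc n) * (Qfun w \<mu> x r + 1)"
      using A by (intro mult_right_mono ennreal_leI) (auto intro: order_trans[OF _ power_increasing[of 1]])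
    finally show ?thesis unfolding A_def .
  next
    case 2
    have "Qfun w \<mu> x R + 1 \<le> ennreal A * (Qfun w \<mu> x (R / 2) + 1)"
      using step[of "R / 2"] 2 r(1) by simp
    also have "\<dots> \<le> ennreal A * (ennreal (A ^ n) * (Qfun w \<mu> x r + 1))"
      using Suc.IH[of "R / 2"] Suc.prems(2) 2 unfolding A_def by (intro mult_left_mono) auto
    also have "\<dots> = ennreal (A ^ Suc n) * (Qfun w \<mu> x r + 1)"
      using A by (simp add: ennreal_mult mult.assoc)
    finally show ?thesis unfolding A_def .
  qed
qed

lemma rho_w_approx_below:
  assumes "rho_w C1 w \<mu> x = ereal p" and "q < p"
  obtains r where "q < r" "r \<le> p" "0 < r" "Qfun w \<mu> x r \<le> ennreal C1"
proof -
  let ?S = "{ereal r | r. 0 < r \<and> Qfun w \<mu> x r \<le> ennreal C1}"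
  have "ereal q < Sup ?S"
    using assms unfolding rho_w_def by simp
  then obtain r where r: "0 < r" "Qfun w \<mu> x r \<le> ennreal C1" "q < r"
    by (auto simp: less_Sup_iff)
  then have "ereal r \<le> Sup ?S"
    by (intro Sup_upper) auto
  then show ?thesis
    using that r assms(1) unfolding rho_w_def by simp
qed

lemma least_power_of_two_above:
  fixes t :: real
  assumes "1 \<le> t"
  obtains n :: nat where "t \<le> 2^n" "2^n \<le> 2 * t"
proof -
  obtain m :: nat where "t < 2^m"
    using real_arch_pow[of 2 t] by auto
  define n where "n = (LEAST n::nat. t \<le> 2^n)"
  have "t \<le> 2^n"
    unfolding n_def by (rule LeastI[of _ m]) (use \<open>t < 2^m\<close> in simp)
  moreover have "2^n \<le> 2 * t"
  proof (cases n)
    case 0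
    then show ?thesis using assms by simp
  next
    case (Suc k)
    then have "\<not> t \<le> 2^k"
      unfolding n_def by (intro not_less_Least) simp
    then show ?thesis
      using Suc by simp
  qed
  ultimately show ?thesis
    using that by blast
qed

lemma Qfun_le_power_ratio_rho_w:
  fixes w :: "'a::euclidean_space \<Rightarrow> real" and \<mu> :: "'a measure"
  assumes A2: "A2_weight w" and C1: "0 \<le> C1"
    and M2: "\<And>x r. r > 0 \<Longrightarrow>
        pimeas w \<mu> (ball x (2 * r)) \<le>
          ennreal C1 * (pimeas w \<mu> (ball x r) + ennreal (wmeas w (ball x r) / r^2))"
    and N: "4 * C1 + 1 \<le> 2 ^ N"
    and rho: "rho_w C1 w \<mu> x = ereal p" and p: "0 < p" "p \<le> R"
  shows "Qfun w \<mu> x R \<le> ennreal ((C1 + 1) * 4 ^ N * (R / p) ^ N)"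
proof -
  obtain r where r: "p / 2 < r" "r \<le> p" "0 < r" "Qfun w \<mu> x r \<le> ennreal C1"
    using rho_w_approx_below[OF rho, of "p / 2"] p by auto
  obtain n where n: "R / r \<le> 2^n" "2^n \<le> 2 * (R / r)"
    using least_power_of_two_above[of "R / r"] r p by auto
  have "R / r \<le> R / (p / 2)"
    using r p by (intro divide_left_mono) auto
  with n have n_bound: "2^n \<le> 4 * (R / p)"
    by simp
  have "(4 * C1 + 1)^n \<le> ((2::real)^N)^n"
    using N C1 by (intro power_mono) auto
  also have "\<dots> = (2^n)^N"
    by (simp add: power_mult[symmetric] mult.commute)
  also have "\<dots> \<le> (4 * (R / p))^N"
    using n_bound by (intro power_mono) auto
  finally have "(4 * C1 + 1)^n * (C1 + 1) \<le> (4 * (R / p))^N * (C1 + 1)"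
    using C1 by (intro mult_right_mono) auto
  also have "\<dots> = (C1 + 1) * 4 ^ N * (R / p) ^ N"
    by (simp only: power_mult_distrib mult_ac)
  finally have real_bound: "(4 * C1 + 1)^n * (C1 + 1) \<le> (C1 + 1) * 4 ^ N * (R / p) ^ N" .
  have "Qfun w \<mu> x R \<le> Qfun w \<mu> x R + 1"
    by simp
  also have "\<dots> \<le> ennreal ((4 * C1 + 1)^n) * (Qfun w \<mu> x r + 1)"
    using Qfun_growth_bound[OF A2 C1 M2 r(3), of R n] r p n by (simp add: field_simps)
  also have "\<dots> \<le> ennreal ((4 * C1 + 1)^n) * ennreal (C1 + 1)"
    using r(4) C1 by (intro mult_left_mono) (auto simp: ennreal_plus[symmetric])
  also have "\<dots> = ennreal ((4 * C1 + 1)^n * (C1 + 1))"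
    using C1 by (simp add: ennreal_mult)
  also have "\<dots> \<le> ennreal ((C1 + 1) * 4 ^ N * (R / p) ^ N)"
    using real_bound by (rule ennreal_leI)
  finally show ?thesis .
qed

theorem lemma2p2:
  fixes w :: "'a::euclidean_space \<Rightarrow> real" and \<mu> :: "'a measure"
    and \<beta> Cw C0 \<delta> C1 :: real
  assumes dim: "DIM('a) \<ge> 3"
    and A2: "A2_weight w"
    and beta: "\<beta> > 2" and Cw: "Cw > 0"
    and revdbl: "\<And>x r t. r > 0 \<Longrightarrow> t > 1 \<Longrightarrow>
        wmeas w (ball x (t * r)) \<ge> Cw * t powr \<beta> * wmeas w (ball x r)"
    and radon: "radon_measure \<mu>"
    and cpos: "C0 > 0" "\<delta> > 0" "C1 > 0"
    and M1: "\<And>x r R. 0 < r \<Longrightarrow> r < R \<Longrightarrow>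
        Qfun w \<mu> x r \<le> ennreal (C0 * (r / R) powr \<delta>) * Qfun w \<mu> x R"
    and M2: "\<And>x r. r > 0 \<Longrightarrow>
        pimeas w \<mu> (ball x (2 * r)) \<le>
          ennreal C1 * (pimeas w \<mu> (ball x r) + ennreal (wmeas w (ball x r) / r^2))"
  shows "\<exists>N0::nat. \<exists>C>0. \<forall>x R. 0 < rho_w C1 w \<mu> x \<and> rho_w C1 w \<mu> x \<le> ereal R \<longrightarrow>
           Qfun w \<mu> x R \<le> ennreal (C * (R / real_of_ereal (rho_w C1 w \<mu> x)) ^ N0)"
proof -
  obtain N0 :: nat where N0: "4 * C1 + 1 < 2 ^ N0"
    using real_arch_pow[of 2 "4 * C1 + 1"] by auto
  show ?thesis
  proof (intro exI[of _ N0] exI[of _ "(C1 + 1) * 4 ^ N0"] conjI allI impI)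
    show "(C1 + 1) * 4 ^ N0 > 0"
      using cpos by simp
    fix x R
    assume "0 < rho_w C1 w \<mu> x \<and> rho_w C1 w \<mu> x \<le> ereal R"
    then obtain p where rho: "rho_w C1 w \<mu> x = ereal p" and "0 < p" "p \<le> R"
      by (cases "rho_w C1 w \<mu> x") auto
    then show "Qfun w \<mu> x R \<le> ennreal ((C1 + 1) * 4 ^ N0 * (R / real_of_ereal (rho_w C1 w \<mu> x)) ^ N0)"
      using Qfun_le_power_ratio_rho_w[OF A2 _ M2 _ rho] N0 cpos(3) by simp
  qed
qed

end
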